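(* Let $X=G/K$ be a symmetric space of non-compact type of rank $r$, with base point, Cartan decomposition $\mathfrak g=\mathfrak k+\mathfrak p$ and $\mathfrak p$ identified with the tangent space at the base point. Let $1\le k\le r$ and suppose $Y\times\mathbb R^k\subset X$ is a totally geodesic submanifold through the base point (a Riemannian product with an isometric Euclidean $\mathbb R^k$-factor) with $\dim(Y\times\mathbb R^k)=\mathrm{srk}^k(X)$; let $V_k\subset\mathfrak p$ be the $k$-dimensional subspace tangent to the $\mathbb R^k$-factor. Then for any maximal abelian subspace $\mathfrak a\subset\mathfrak p$ containing $V_k$, the Lie triple system corresponding to $Y\times\mathbb R^k$ is $\mathfrak p'=\mathfrak a\oplus\bigoplus_{\alpha\in\Lambda^+,\ \alpha(V_k)=0}\mathfrak p_\alpha$.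
   Context: $\mathrm{srk}^k(X)$, the $k$-th splitting rank, is the maximal dimension of a totally geodesic submanifold of $X$ which splits off an isometric $\mathbb R^k$-factor. For a maximal abelian $\mathfrak a\subset\mathfrak p$, $\Lambda$ is the set of restricted roots, $\Lambda^+$ the positive roots, $\mathfrak p_\alpha=(\mathfrak g_\alpha\oplus\mathfrak g_{-\alpha})\cap\mathfrak p$. Totally geodesic submanifolds through the base point correspond to Lie triple systems $\mathfrak p'\subset\mathfrak p$ (subspaces with $[\mathfrak p',[\mathfrak p',\mathfrak p']]\subset\mathfrak p'$) via tangent spaces. *)

theory Defs
  imports "HOL-Analysis.Analysis"
begin

text \<open>Model: the Lie algebra g of the isometry group is realised as a real Lie algebra of
 n x n matrices closed under transpose; Cartan involution theta X = - transpose X,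
 k = skew part, p = symmetric part (tangent space at the base point).\<close>

definition lie_bracket :: "real^'n^'n \<Rightarrow> real^'n^'n \<Rightarrow> real^'n^'n" where
  "lie_bracket X Y = X ** Y - Y ** X"

definition self_adjoint_lie_algebra :: "(real^'n^'n) set \<Rightarrow> bool" where
  "self_adjoint_lie_algebra g \<longleftrightarrow> subspace g \<and>
     (\<forall>X\<in>g. \<forall>Y\<in>g. lie_bracket X Y \<in> g) \<and> (\<forall>X\<in>g. transpose X \<in> g)"

definition ppart :: "(real^'n^'n) set \<Rightarrow> (real^'n^'n) set" where
  "ppart g = {X \<in> g. transpose X = X}"

text \<open>Noncompact type: no Euclidean de Rham factor, i.e. the Lie triple system p has trivial centre.\<close>
definition noncompact_type :: "(real^'n^'n) set \<Rightarrow> bool" where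
  "noncompact_type g \<longleftrightarrow> self_adjoint_lie_algebra g \<and>
     (\<forall>X\<in>ppart g. (\<forall>Y\<in>ppart g. lie_bracket X Y = 0) \<longrightarrow> X = 0)"

definition lie_triple_system :: "(real^'n^'n) set \<Rightarrow> (real^'n^'n) set \<Rightarrow> bool" where
  "lie_triple_system g P \<longleftrightarrow> subspace P \<and> P \<subseteq> ppart g \<and>
     (\<forall>x\<in>P. \<forall>y\<in>P. \<forall>z\<in>P. lie_bracket x (lie_bracket y z) \<in> P)"

text \<open>The totally geodesic submanifold with tangent Lie triple system P splits off an
 isometric R^k factor with tangent space V.\<close>
definition flat_factor :: "(real^'n^'n) set \<Rightarrow> nat \<Rightarrow> (real^'n^'n) set \<Rightarrow> bool" where
  "flat_factor P k V \<longleftrightarrow> subspace V \<and> V \<subseteq> P \<and> dim V = k \<and>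
     (\<forall>v\<in>V. \<forall>x\<in>P. lie_bracket v x = 0)"

definition srk :: "(real^'n^'n) set \<Rightarrow> nat \<Rightarrow> nat" where
  "srk g k = (GREATEST d. \<exists>P V. lie_triple_system g P \<and> flat_factor P k V \<and> dim P = d)"

definition abelian_subspace :: "(real^'n^'n) set \<Rightarrow> (real^'n^'n) set \<Rightarrow> bool" where
  "abelian_subspace g A \<longleftrightarrow> subspace A \<and> A \<subseteq> ppart g \<and>
     (\<forall>x\<in>A. \<forall>y\<in>A. lie_bracket x y = 0)"

definition maximal_abelian :: "(real^'n^'n) set \<Rightarrow> (real^'n^'n) set \<Rightarrow> bool" where
  "maximal_abelian g A \<longleftrightarrow> abelian_subspace g A \<and>
     (\<forall>B. abelian_subspace g B \<and> A \<subseteq> B \<longrightarrow> B = A)"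

definition real_rank :: "(real^'n^'n) set \<Rightarrow> nat" where
  "real_rank g = (GREATEST d. \<exists>A. maximal_abelian g A \<and> dim A = d)"

definition rootspace :: "(real^'n^'n) set \<Rightarrow> (real^'n^'n) set \<Rightarrow> (real^'n^'n \<Rightarrow> real) \<Rightarrow> (real^'n^'n) set" where
  "rootspace g a \<alpha> = {X \<in> g. \<forall>H\<in>a. lie_bracket H X = \<alpha> H *\<^sub>R X}"

text \<open>Restricted roots, as functionals on a (normalised to vanish outside a).\<close>
definition restricted_roots :: "(real^'n^'n) set \<Rightarrow> (real^'n^'n) set \<Rightarrow> (real^'n^'n \<Rightarrow> real) set" where
  "restricted_roots g a = {\<alpha>. (\<forall>H. H \<notin> a \<longrightarrow> \<alpha> H = 0) \<and> (\<exists>H\<in>a. \<alpha> H \<noteq> 0) \<and>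
       rootspace g a \<alpha> \<noteq> {0}}"

definition regular_element :: "(real^'n^'n) set \<Rightarrow> (real^'n^'n) set \<Rightarrow> real^'n^'n \<Rightarrow> bool" where
  "regular_element g a H0 \<longleftrightarrow> H0 \<in> a \<and> (\<forall>\<alpha>\<in>restricted_roots g a. \<alpha> H0 \<noteq> 0)"

definition positive_roots :: "(real^'n^'n) set \<Rightarrow> (real^'n^'n) set \<Rightarrow> real^'n^'n \<Rightarrow> (real^'n^'n \<Rightarrow> real) set" where
  "positive_roots g a H0 = {\<alpha> \<in> restricted_roots g a. \<alpha> H0 > 0}"

definition p_alpha :: "(real^'n^'n) set \<Rightarrow> (real^'n^'n) set \<Rightarrow> (real^'n^'n \<Rightarrow> real) \<Rightarrow> (real^'n^'n) set" where
  "p_alpha g a \<alpha> = ppart g \<inter>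
     {Y + Z | Y Z. Y \<in> rootspace g a \<alpha> \<and> Z \<in> rootspace g a (\<lambda>H. - \<alpha> H)}"

end

theory Submission
  imports Defs
begin

text \<open>
  The centralizer of \<open>V\<close> in \<open>\<frak>p\<close> is itself a Lie triple system that contains \<open>\<frak>p'\<close>
  and splits off \<open>V\<close>, so the maximality of \<open>dim \<frak>p'\<close> forces equality. To compute this
  centralizer, diagonalize the commuting symmetric operators \<open>ad H\<close>, \<open>H \<in> \<frak>a\<close>,
  simultaneously on the centralizer of \<open>V\<close> in \<open>\<frak>g\<close>. The symmetric part of a joint
  eigenvector with eigenvalue functional \<open>\<beta>\<close> lies in \<open>\<frak>a\<close> if \<open>\<beta> = 0\<close> (maximality of
  \<open>\<frak>a\<close>), and otherwise in \<open>\<frak>p\<^sub>\<beta> = \<frak>p\<^sub>-\<^sub>\<beta>\<close>, where \<open>\<beta>\<close> vanishes on \<open>V\<close> and one of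
  \<open>\<plusminus>\<beta>\<close> is positive.
\<close>

section \<open>Commutators of real square matrices\<close>

lemma bilinear_matrix_matrix_mult: "bilinear ((**) :: real^'n^'m \<Rightarrow> real^'p^'n \<Rightarrow> real^'p^'m)"
  by (auto simp: bilinear_def matrix_matrix_mult_def vec_eq_iff sum.distrib sum_distrib_left
      algebra_simps intro!: linearI)

lemmas matrix_mult_add_left = bilinear_ladd[OF bilinear_matrix_matrix_mult]
   and matrix_mult_add_right = bilinear_radd[OF bilinear_matrix_matrix_mult]
   and matrix_mult_diff_left = bilinear_lsub[OF bilinear_matrix_matrix_mult]
   and matrix_mult_diff_right = bilinear_rsub[OF bilinear_matrix_matrix_mult]
   and matrix_mult_scaleR_left = bilinear_lmul[OF bilinear_matrix_matrix_mult]
   and matrix_mult_scaleR_right = bilinear_rmul[OF bilinear_matrix_matrix_mult]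

lemma bilinear_lie_bracket: "bilinear (lie_bracket :: real^'n^'n \<Rightarrow> _)"
  by (auto simp: bilinear_def lie_bracket_def matrix_mult_add_left matrix_mult_add_right
      matrix_mult_scaleR_left matrix_mult_scaleR_right algebra_simps intro!: linearI)

lemmas lie_bracket_add_left = bilinear_ladd[OF bilinear_lie_bracket]
   and lie_bracket_add_right = bilinear_radd[OF bilinear_lie_bracket]
   and lie_bracket_scaleR_left = bilinear_lmul[OF bilinear_lie_bracket]
   and lie_bracket_scaleR_right = bilinear_rmul[OF bilinear_lie_bracket]
   and lie_bracket_zero_left [simp] = bilinear_lzero[OF bilinear_lie_bracket]
   and lie_bracket_zero_right [simp] = bilinear_rzero[OF bilinear_lie_bracket]

lemma linear_lie_bracket: "linear (lie_bracket X)"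
  using bilinear_lie_bracket unfolding bilinear_def by blast

lemma lie_bracket_antisym: "lie_bracket X Y = - lie_bracket Y X"
  by (simp add: lie_bracket_def)

lemma lie_bracket_self [simp]: "lie_bracket X X = 0"
  by (simp add: lie_bracket_def)

lemma lie_bracket_jacobi:
  "lie_bracket X (lie_bracket Y Z) = lie_bracket (lie_bracket X Y) Z + lie_bracket Y (lie_bracket X Z)"
  by (simp add: lie_bracket_def matrix_mult_diff_left matrix_mult_diff_right matrix_mul_assoc
      algebra_simps)

lemma linear_transpose: "linear (transpose :: real^'n^'m \<Rightarrow> real^'m^'n)"
  by (auto simp: transpose_def vec_eq_iff intro!: linearI)

lemma transpose_lie_bracket: "transpose (lie_bracket X Y) = lie_bracket (transpose Y) (transpose X)"
  by (simp add: lie_bracket_def linear_diff[OF linear_transpose] matrix_transpose_mul)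

lemma inner_matrix_mult_left: "inner ((A::real^'n^'n) ** B) C = inner B (transpose A ** C)"
  by (simp add: inner_vec_def matrix_matrix_mult_def transpose_def sum_distrib_left
     sum_distrib_right algebra_simps; subst sum.swap; subst (2) sum.swap; rule sum.cong; simp;
     subst sum.swap; simp)

lemma inner_matrix_mult_right: "inner ((A::real^'n^'n) ** B) C = inner A (C ** transpose B)"
  by (simp add: inner_vec_def matrix_matrix_mult_def transpose_def sum_distrib_left
     sum_distrib_right algebra_simps; subst (2) sum.swap; simp)

lemma inner_lie_bracket_symmetric:
  assumes "transpose H = H"
  shows "inner (lie_bracket H X) Y = inner X (lie_bracket H Y)"
  using assms
  by (simp only: lie_bracket_def inner_diff_left inner_diff_right
      inner_matrix_mult_left[of H X] inner_matrix_mult_right[of X H])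

section \<open>Simultaneous diagonalization of commuting self-adjoint maps\<close>

lemma nonneg_quadratic_linear_coeff_eq_0:
  fixes b d :: real
  assumes nonneg: "\<And>t. 0 \<le> t * b + t\<^sup>2 * d"
  shows "b = 0"
proof (rule ccontr)
  assume "b \<noteq> 0"
  define D where "D = \<bar>d\<bar> + 1"
  define t where "t = - b / (2 * D)"
  have "D > 0" "\<bar>d\<bar> \<le> D" by (simp_all add: D_def)
  have "t * b + t\<^sup>2 * d \<le> t * b + t\<^sup>2 * D"
    using \<open>\<bar>d\<bar> \<le> D\<close> by (intro add_left_mono mult_left_mono) auto
  also have "\<dots> = - b\<^sup>2 / (4 * D)"
    using \<open>D > 0\<close> by (simp add: t_def power2_eq_square field_simps)
  also have "\<dots> < 0"
    using \<open>b \<noteq> 0\<close> \<open>D > 0\<close> by (simp add: divide_neg_pos)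
  finally show False using nonneg[of t] by simp
qed

lemma selfadjoint_nonneg_null_vector:
  fixes f :: "'a::real_inner \<Rightarrow> 'a"
  assumes lin: "linear f" and U: "subspace U"
    and sa: "\<And>x y. inner (f x) y = inner x (f y)"
    and nonneg: "\<And>y. y \<in> U \<Longrightarrow> 0 \<le> inner (f y) y"
    and x: "x \<in> U" "inner (f x) x = 0" and w: "w \<in> U"
  shows "inner (f x) w = 0"
proof -
  have "0 \<le> t * (2 * inner (f x) w) + t\<^sup>2 * inner (f w) w" for t
  proof -
    have "0 \<le> inner (f (x + t *\<^sub>R w)) (x + t *\<^sub>R w)"
      using x w U by (intro nonneg) (simp add: subspace_add subspace_scale)
    also have "\<dots> = t * (2 * inner (f x) w) + t\<^sup>2 * inner (f w) w"
      using x(2) sa[of w x]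
      by (simp add: linear_add[OF lin] linear_scale[OF lin] inner_add_left inner_add_right
          inner_commute power2_eq_square algebra_simps)
    finally show ?thesis .
  qed
  then show ?thesis
    using nonneg_quadratic_linear_coeff_eq_0 by fastforce
qed

lemma selfadjoint_eigenvector_exists:
  fixes f :: "'a::euclidean_space \<Rightarrow> 'a"
  assumes lin: "linear f" and U: "subspace U" "U \<noteq> {0}" and inv: "f ` U \<subseteq> U"
    and sa: "\<And>x y. inner (f x) y = inner x (f y)"
  obtains x c where "x \<in> U" "x \<noteq> 0" "f x = c *\<^sub>R x"
proof -
  let ?S = "U \<inter> sphere 0 1"
  have normalize: "(1 / norm y) *\<^sub>R y \<in> ?S" if "y \<in> U" "y \<noteq> 0" for y
    using that U(1) by (simp add: subspace_scale)
  have compact: "compact ?S"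
    by (rule closed_Int_compact[OF closed_subspace[OF U(1)] compact_sphere])
  have nonempty: "?S \<noteq> {}"
  proof -
    obtain u where "u \<in> U" "u \<noteq> 0"
      using U subspace_0 by blast
    then show ?thesis
      using normalize by blast
  qed
  have continuous: "continuous_on ?S (\<lambda>x. inner (f x) x)"
    using lin by (intro continuous_intros linear_continuous_on linear_conv_bounded_linear[THEN iffD1])
  obtain x0 where x0: "x0 \<in> ?S" and max: "\<And>y. y \<in> ?S \<Longrightarrow> inner (f y) y \<le> inner (f x0) x0"
    using continuous_attains_sup[OF compact nonempty continuous] by blast
  define c where "c = inner (f x0) x0"
  \<comment> \<open>\<open>x0\<close> maximizes the Rayleigh quotient, so \<open>h\<close> is positive semidefinite on \<open>U\<close> with null vector \<open>x0\<close>.\<close>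
  define h where "h = (\<lambda>y. c *\<^sub>R y - f y)"
  have x0U: "x0 \<in> U" and "inner x0 x0 = 1"
    using x0 by (auto simp: power2_norm_eq_inner[symmetric])
  have lin_h: "linear h"
    by (simp add: h_def linear_iff linear_add[OF lin] linear_scale[OF lin] algebra_simps)
  have h_nonneg: "0 \<le> inner (h y) y" if "y \<in> U" for y
  proof (cases "y = 0")
    case False
    have "inner (f ((1 / norm y) *\<^sub>R y)) ((1 / norm y) *\<^sub>R y) \<le> c"
      unfolding c_def by (rule max[OF normalize[OF that False]])
    then have "inner (f y) y / (norm y)\<^sup>2 \<le> c"
      by (simp add: linear_scale[OF lin] power2_eq_square)
    then have "inner (f y) y \<le> c * inner y y"
      using False by (simp add: divide_le_eq power2_norm_eq_inner mult.commute)
    then show ?thesis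
      by (simp add: h_def inner_diff_left)
  qed (simp add: h_def linear_0[OF lin])
  have hU: "h x0 \<in> U"
    using x0U inv U(1) by (auto simp: h_def intro: subspace_diff subspace_scale)
  have "inner (h x0) (h x0) = 0"
  proof (rule selfadjoint_nonneg_null_vector[OF lin_h U(1) _ h_nonneg x0U _ hU])
    show "inner (h x) y = inner x (h y)" for x y
      by (simp add: h_def inner_diff_left inner_diff_right sa)
    show "inner (h x0) x0 = 0"
      using \<open>inner x0 x0 = 1\<close> by (simp add: h_def c_def inner_diff_left)
  qed
  then have "f x0 = c *\<^sub>R x0"
    by (simp add: h_def)
  moreover have "x0 \<noteq> 0"
    using \<open>inner x0 x0 = 1\<close> by auto
  ultimately show ?thesis
    using that x0U by blast
qed

lemma eigenspace_invariant:
  assumes "linear g" "\<And>x. f (g x) = g (f x)" "g ` U \<subseteq> U"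
  shows "g ` {x \<in> U. f x = c *\<^sub>R x} \<subseteq> {x \<in> U. f x = c *\<^sub>R x}"
  using assms by (auto simp: linear_scale)

lemma orthogonal_complement_invariant:
  assumes "\<And>x y. inner (g x) y = inner x (g y)" "g ` E \<subseteq> E" "g ` U \<subseteq> U"
  shows "g ` {x \<in> U. \<forall>e\<in>E. inner x e = 0} \<subseteq> {x \<in> U. \<forall>e\<in>E. inner x e = 0}"
  using assms by (auto simp: image_subset_iff)

lemma subspace_orthogonal_complement:
  assumes "subspace U"
  shows "subspace {x \<in> U. \<forall>e\<in>E. inner x e = 0}"
  using assms by (auto simp: subspace_def inner_add_left)

lemma decompose_orthogonal_complement:
  fixes E U :: "'a::euclidean_space set"
  assumes "subspace E" "subspace U" "E \<subseteq> U" "u \<in> U"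
  obtains y z where "y \<in> E" "z \<in> {x \<in> U. \<forall>e\<in>E. inner x e = 0}" "u = y + z"
proof -
  obtain y z where yz: "y \<in> span E" "\<And>w. w \<in> span E \<Longrightarrow> orthogonal z w" "u = y + z"
    using orthogonal_subspace_decomp_exists[of E u] by blast
  have "y \<in> E"
    using yz(1) assms(1) by (metis span_eq_iff)
  have "z = u - y"
    using yz(3) by simp
  then have "z \<in> U"
    using \<open>y \<in> E\<close> assms(2-4) by (simp add: subsetD subspace_diff)
  then have "z \<in> {x \<in> U. \<forall>e\<in>E. inner x e = 0}"
    using yz(2) by (auto simp: orthogonal_def span_base)
  then show ?thesis
    using that \<open>y \<in> E\<close> yz(3) by blast
qed

lemma commuting_selfadjoint_simultaneous_eigenvectors:
  fixes f :: "'i \<Rightarrow> 'a::euclidean_space \<Rightarrow> 'a"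
  assumes lin: "\<And>i. i \<in> I \<Longrightarrow> linear (f i)"
    and sa: "\<And>i x y. i \<in> I \<Longrightarrow> inner (f i x) y = inner x (f i y)"
    and comm: "\<And>i j x. i \<in> I \<Longrightarrow> j \<in> I \<Longrightarrow> f i (f j x) = f j (f i x)"
  shows "subspace U \<Longrightarrow> (\<And>i. i \<in> I \<Longrightarrow> f i ` U \<subseteq> U) \<Longrightarrow>
    U \<subseteq> span {x \<in> U. \<exists>c. \<forall>i\<in>I. f i x = c i *\<^sub>R x}"
proof (induction "dim U" arbitrary: U rule: less_induct)
  case less
  let ?J = "\<lambda>U. {x \<in> U. \<exists>c. \<forall>i\<in>I. f i x = c i *\<^sub>R x}"
  have J_mono: "span (?J S) \<subseteq> span (?J U)" if "S \<subseteq> U" for S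
    using that by (intro span_mono) blast
  have dim_less: "dim S < dim U" if "subspace S" "S \<subseteq> U" "S \<noteq> U" for S
    using that less.prems(1) dim_subset[of S U] subspace_dim_equal[of S U] by linarith
  show ?case
  proof (cases "\<forall>i\<in>I. \<forall>x\<in>U. \<exists>c. f i x = c *\<^sub>R x")
    case True
    have "U \<subseteq> ?J U"
    proof
      fix x assume "x \<in> U"
      then have "\<forall>i\<in>I. \<exists>c. f i x = c *\<^sub>R x"
        using True by blast
      then show "x \<in> ?J U"
        using \<open>x \<in> U\<close> by (auto dest: bchoice)
    qed
    then show ?thesis
      using span_superset by blast
  next
    case False
    then obtain i x1 where i: "i \<in> I" and x1: "x1 \<in> U" "\<And>c. f i x1 \<noteq> c *\<^sub>R x1"
      by blast
    have "x1 \<noteq> 0"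
      using x1(2)[of 0] linear_0[OF lin[OF i]] by auto
    then have "U \<noteq> {0}"
      using x1(1) by blast
    then obtain x0 c where x0: "x0 \<in> U" "x0 \<noteq> 0" "f i x0 = c *\<^sub>R x0"
      using selfadjoint_eigenvector_exists[OF lin[OF i] less.prems(1) _ less.prems(2)[OF i] sa[OF i]]
      by blast
    define E where "E = {x \<in> U. f i x = c *\<^sub>R x}"
    define E' where "E' = {x \<in> U. \<forall>e\<in>E. inner x e = 0}"
    have "subspace E"
      using less.prems(1) lin[OF i]
      by (auto simp: E_def subspace_def linear_add linear_scale linear_0 algebra_simps)
    have "subspace E'"
      unfolding E'_def by (rule subspace_orthogonal_complement[OF less.prems(1)])
    have "E \<subseteq> U" "E' \<subseteq> U"
      by (auto simp: E_def E'_def)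
    have "E \<noteq> U"
      using x1 by (auto simp: E_def)
    have "x0 \<in> E" "x0 \<notin> E'"
      using x0 by (auto simp: E_def E'_def)
    then have "E' \<noteq> U"
      using x0(1) by blast
    have inv_E: "f j ` E \<subseteq> E" if "j \<in> I" for j
      unfolding E_def using that i by (intro eigenspace_invariant lin comm less.prems(2))
    have inv_E': "f j ` E' \<subseteq> E'" if "j \<in> I" for j
      unfolding E'_def using that by (intro orthogonal_complement_invariant sa inv_E less.prems(2))
    have E_span: "E \<subseteq> span (?J U)"
      using less.hyps[OF dim_less \<open>subspace E\<close> inv_E] J_mono
        \<open>subspace E\<close> \<open>E \<subseteq> U\<close> \<open>E \<noteq> U\<close> by blast
    have E'_span: "E' \<subseteq> span (?J U)"
      using less.hyps[OF dim_less \<open>subspace E'\<close> inv_E'] J_mono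
        \<open>subspace E'\<close> \<open>E' \<subseteq> U\<close> \<open>E' \<noteq> U\<close> by blast
    show ?thesis
    proof
      fix u assume "u \<in> U"
      then obtain y z where "y \<in> E" "z \<in> E'" "u = y + z"
        using decompose_orthogonal_complement[OF \<open>subspace E\<close> less.prems(1) \<open>E \<subseteq> U\<close>]
        unfolding E'_def by blast
      then show "u \<in> span (?J U)"
        using E_span E'_span by (auto intro: span_add)
    qed
  qed
qed

section \<open>Centralizers of flat factors\<close>

definition centralizer :: "(real^'n^'n) set \<Rightarrow> (real^'n^'n) set \<Rightarrow> (real^'n^'n) set" where
  "centralizer S V = {X \<in> S. \<forall>v\<in>V. lie_bracket v X = 0}"

lemma subspace_centralizer: "subspace S \<Longrightarrow> subspace (centralizer S V)"
  by (auto simp: subspace_def centralizer_def lie_bracket_add_right lie_bracket_scaleR_right)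

lemma subspace_ppart: "subspace g \<Longrightarrow> subspace (ppart g)"
  by (auto simp: subspace_def ppart_def linear_add[OF linear_transpose]
      linear_scale[OF linear_transpose] linear_0[OF linear_transpose])

lemma transpose_triple_bracket_symmetric:
  assumes "transpose X = X" "transpose Y = Y" "transpose Z = Z"
  shows "transpose (lie_bracket X (lie_bracket Y Z)) = lie_bracket X (lie_bracket Y Z)"
proof -
  have "transpose (lie_bracket X (lie_bracket Y Z)) = lie_bracket (lie_bracket Z Y) X"
    by (simp add: transpose_lie_bracket assms)
  also have "\<dots> = lie_bracket X (lie_bracket Y Z)"
    by (simp add: lie_bracket_def matrix_mult_diff_left matrix_mult_diff_right)
  finally show ?thesis .
qed

lemma lie_triple_system_centralizer:
  assumes "self_adjoint_lie_algebra g"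
  shows "lie_triple_system g (centralizer (ppart g) V)"
  unfolding lie_triple_system_def
proof (intro conjI ballI)
  show "subspace (centralizer (ppart g) V)"
    using assms by (simp add: self_adjoint_lie_algebra_def subspace_centralizer subspace_ppart)
  show "centralizer (ppart g) V \<subseteq> ppart g"
    by (auto simp: centralizer_def)
  fix X Y Z assume XYZ: "X \<in> centralizer (ppart g) V" "Y \<in> centralizer (ppart g) V"
    "Z \<in> centralizer (ppart g) V"
  then have "lie_bracket X (lie_bracket Y Z) \<in> ppart g"
    using assms
    by (simp add: centralizer_def ppart_def self_adjoint_lie_algebra_def
        transpose_triple_bracket_symmetric)
  moreover have "lie_bracket v (lie_bracket X (lie_bracket Y Z)) = 0" if "v \<in> V" for v
    using XYZ that by (simp add: centralizer_def lie_bracket_jacobi[of v])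
  ultimately show "lie_bracket X (lie_bracket Y Z) \<in> centralizer (ppart g) V"
    by (simp add: centralizer_def)
qed

lemma dim_le_srk:
  assumes "lie_triple_system g P" "flat_factor P k V"
  shows "dim P \<le> srk g k"
  unfolding srk_def
  by (rule Greatest_le_nat[where b = "DIM(real^'n^'n)"])
    (use assms dim_subset_UNIV[where 'a="real^'n^'n"] in auto)

lemma maximal_split_lie_triple_system_eq_centralizer:
  assumes "self_adjoint_lie_algebra g" "lie_triple_system g P" "flat_factor P k V"
    and "dim P = srk g k"
  shows "P = centralizer (ppart g) V"
proof (rule subspace_dim_equal)
  show "subspace P"
    using assms(2) by (simp add: lie_triple_system_def)
  show "subspace (centralizer (ppart g) V)" "P \<subseteq> centralizer (ppart g) V"
    using lie_triple_system_centralizer[OF assms(1)] assms(2,3)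
    by (auto simp: lie_triple_system_def flat_factor_def centralizer_def)
  then have "flat_factor (centralizer (ppart g) V) k V"
    using assms(3) by (auto simp: flat_factor_def centralizer_def)
  then show "dim (centralizer (ppart g) V) \<le> dim P"
    using dim_le_srk lie_triple_system_centralizer[OF assms(1)] assms(4) by metis
qed

section \<open>Restricted root spaces\<close>

definition symmetric_part :: "real^'n^'n \<Rightarrow> real^'n^'n" where
  "symmetric_part X = (1/2) *\<^sub>R (X + transpose X)"

lemma linear_symmetric_part: "linear symmetric_part"
  unfolding symmetric_part_def
  by (simp add: linear_iff linear_add[OF linear_transpose] linear_scale[OF linear_transpose]
      algebra_simps)

lemma symmetric_part_eq: "transpose X = X \<Longrightarrow> symmetric_part X = X"
  by (simp add: symmetric_part_def scaleR_2[symmetric])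

lemma symmetric_part_in_ppart:
  assumes "self_adjoint_lie_algebra g" "X \<in> g"
  shows "symmetric_part X \<in> ppart g"
  using assms
  by (auto simp: symmetric_part_def ppart_def self_adjoint_lie_algebra_def subspace_add subspace_scale
      linear_add[OF linear_transpose] linear_scale[OF linear_transpose] add.commute)

lemma rootspace_scaleR: "subspace g \<Longrightarrow> X \<in> rootspace g a \<alpha> \<Longrightarrow> c *\<^sub>R X \<in> rootspace g a \<alpha>"
  by (auto simp: rootspace_def lie_bracket_scaleR_right subspace_scale)

lemma transpose_rootspace:
  assumes "self_adjoint_lie_algebra g" "a \<subseteq> ppart g" "X \<in> rootspace g a \<alpha>"
  shows "transpose X \<in> rootspace g a (\<lambda>H. - \<alpha> H)"
  unfolding rootspace_def
proof (intro CollectI conjI ballI)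
  show "transpose X \<in> g"
    using assms by (simp add: self_adjoint_lie_algebra_def rootspace_def)
  fix H assume "H \<in> a"
  then have "transpose H = H" "lie_bracket H X = \<alpha> H *\<^sub>R X"
    using assms(2,3) by (auto simp: ppart_def rootspace_def)
  then have "lie_bracket (transpose X) H = \<alpha> H *\<^sub>R transpose X"
    by (metis transpose_lie_bracket linear_scale[OF linear_transpose])
  then show "lie_bracket H (transpose X) = (- \<alpha> H) *\<^sub>R transpose X"
    by (metis lie_bracket_antisym scaleR_minus_left)
qed

lemma symmetric_part_in_p_alpha:
  assumes "self_adjoint_lie_algebra g" "a \<subseteq> ppart g" "X \<in> rootspace g a \<alpha>"
  shows "symmetric_part X \<in> p_alpha g a \<alpha>"
proof -
  have "subspace g" "X \<in> g"
    using assms by (auto simp: self_adjoint_lie_algebra_def rootspace_def)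
  moreover have "symmetric_part X = (1/2) *\<^sub>R X + (1/2) *\<^sub>R transpose X"
    by (simp add: symmetric_part_def scaleR_add_right)
  ultimately show ?thesis
    unfolding p_alpha_def
    using symmetric_part_in_ppart[OF assms(1)] rootspace_scaleR assms(3)
      transpose_rootspace[OF assms] by blast
qed

lemma p_alpha_uminus: "p_alpha g a (\<lambda>H. - \<alpha> H) = p_alpha g a \<alpha>"
  unfolding p_alpha_def by auto (metis add.commute)+

lemma uminus_restricted_root:
  assumes "self_adjoint_lie_algebra g" "a \<subseteq> ppart g" "\<alpha> \<in> restricted_roots g a"
  shows "(\<lambda>H. - \<alpha> H) \<in> restricted_roots g a"
proof -
  have "0 \<in> rootspace g a \<alpha>"
    using assms(1) by (simp add: self_adjoint_lie_algebra_def rootspace_def subspace_0)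
  then obtain X where "X \<in> rootspace g a \<alpha>" "X \<noteq> 0"
    using assms(3) by (auto simp: restricted_roots_def)
  then have "transpose X \<in> rootspace g a (\<lambda>H. - \<alpha> H)" "transpose X \<noteq> 0"
    using transpose_rootspace[OF assms(1,2)] linear_0[OF linear_transpose] transpose_transpose
    by metis+
  then show ?thesis
    using assms(3) by (auto simp: restricted_roots_def)
qed

lemma lie_bracket_p_alpha_eq_0:
  assumes "X \<in> p_alpha g a \<alpha>" "H \<in> a" "\<alpha> H = 0"
  shows "lie_bracket H X = 0"
  using assms by (auto simp: p_alpha_def rootspace_def lie_bracket_add_right)

lemma commuting_imp_mem_maximal_abelian:
  assumes "self_adjoint_lie_algebra g" "maximal_abelian g a"
    and "X \<in> ppart g" "\<And>H. H \<in> a \<Longrightarrow> lie_bracket H X = 0"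
  shows "X \<in> a"
proof -
  have a: "subspace a" "a \<subseteq> ppart g" "\<And>H H'. H \<in> a \<Longrightarrow> H' \<in> a \<Longrightarrow> lie_bracket H H' = 0"
    and a_max: "\<And>B. abelian_subspace g B \<Longrightarrow> a \<subseteq> B \<Longrightarrow> B = a"
    using assms(2) by (auto simp: maximal_abelian_def abelian_subspace_def)
  define B where "B = span (insert X a)"
  have B_elem: "\<exists>t. Y - t *\<^sub>R X \<in> a" if "Y \<in> B" for Y
    using that a(1) by (simp add: B_def span_insert span_eq_iff[THEN iffD2])
  have "abelian_subspace g B"
    unfolding abelian_subspace_def
  proof (intro conjI ballI)
    show "subspace B"
      by (simp add: B_def)
    show "B \<subseteq> ppart g"
      unfolding B_def using assms(1,3) a(2)
      by (intro span_minimal) (auto simp: self_adjoint_lie_algebra_def subspace_ppart)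
    fix Y Y' assume "Y \<in> B" "Y' \<in> B"
    then obtain t t' H H' where "H \<in> a" "H' \<in> a" "Y = H + t *\<^sub>R X" "Y' = H' + t' *\<^sub>R X"
      using B_elem by (metis diff_add_cancel)
    then show "lie_bracket Y Y' = 0"
      using a(3)[of H H'] assms(4) lie_bracket_antisym[of X H']
      by (simp add: lie_bracket_add_left lie_bracket_add_right lie_bracket_scaleR_left
          lie_bracket_scaleR_right)
  qed
  moreover have "a \<subseteq> B" "X \<in> B"
    using span_superset[of "insert X a"] unfolding B_def by blast+
  ultimately show ?thesis
    using a_max by blast
qed

definition vanishing_root_sum ::
  "(real^'n^'n) set \<Rightarrow> (real^'n^'n) set \<Rightarrow> real^'n^'n \<Rightarrow> (real^'n^'n) set \<Rightarrow> (real^'n^'n) set"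
  where "vanishing_root_sum g a H0 V =
    span (a \<union> \<Union> {p_alpha g a \<alpha> | \<alpha>. \<alpha> \<in> positive_roots g a H0 \<and> (\<forall>v\<in>V. \<alpha> v = 0)})"

lemma p_alpha_subset_vanishing_root_sum:
  assumes "\<alpha> \<in> positive_roots g a H0" "\<forall>v\<in>V. \<alpha> v = 0"
  shows "p_alpha g a \<alpha> \<subseteq> vanishing_root_sum g a H0 V"
  using assms unfolding vanishing_root_sum_def by (blast intro: span_base)

lemma symmetric_part_joint_eigenvector_in_vanishing_root_sum:
  assumes g: "self_adjoint_lie_algebra g" and a: "maximal_abelian g a" and "V \<subseteq> a"
    and H0: "regular_element g a H0"
    and x: "x \<in> centralizer g V" "\<And>H. H \<in> a \<Longrightarrow> lie_bracket H x = c H *\<^sub>R x"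
  shows "symmetric_part x \<in> vanishing_root_sum g a H0 V"
proof (cases "x = 0")
  case True
  then show ?thesis
    by (simp add: symmetric_part_def linear_0[OF linear_transpose] span_0 vanishing_root_sum_def)
next
  case False
  have a_ppart: "a \<subseteq> ppart g"
    using a by (simp add: maximal_abelian_def abelian_subspace_def)
  define \<beta> where "\<beta> = (\<lambda>H. if H \<in> a then c H else 0)"
  have x_root: "x \<in> rootspace g a \<beta>"
    using x by (simp add: rootspace_def centralizer_def \<beta>_def)
  have \<beta>_V: "\<forall>v\<in>V. \<beta> v = 0"
    using x \<open>V \<subseteq> a\<close> False by (auto simp: centralizer_def \<beta>_def)
  have sym_p_alpha: "symmetric_part x \<in> p_alpha g a \<beta>"
    by (rule symmetric_part_in_p_alpha[OF g a_ppart x_root])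
  show ?thesis
  proof (cases "\<forall>H\<in>a. \<beta> H = 0")
    case True
    have "symmetric_part x \<in> a"
    proof (rule commuting_imp_mem_maximal_abelian[OF g a])
      show "symmetric_part x \<in> ppart g"
        using sym_p_alpha by (simp add: p_alpha_def)
      show "lie_bracket H (symmetric_part x) = 0" if "H \<in> a" for H
        using lie_bracket_p_alpha_eq_0[OF sym_p_alpha that] True that by blast
    qed
    then show ?thesis
      by (simp add: vanishing_root_sum_def span_base)
  next
    case False
    then have root: "\<beta> \<in> restricted_roots g a"
      using x_root \<open>x \<noteq> 0\<close> by (auto simp: restricted_roots_def \<beta>_def)
    then have "\<beta> H0 \<noteq> 0"
      using H0 by (simp add: regular_element_def)
    then consider "\<beta> H0 > 0" | "- \<beta> H0 > 0"
      by linarith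
    then show ?thesis
    proof cases
      case 1
      then have "\<beta> \<in> positive_roots g a H0"
        using root by (simp add: positive_roots_def)
      then show ?thesis
        using sym_p_alpha \<beta>_V p_alpha_subset_vanishing_root_sum by blast
    next
      case 2
      then have "(\<lambda>H. - \<beta> H) \<in> positive_roots g a H0"
        using uminus_restricted_root[OF g a_ppart root] by (simp add: positive_roots_def)
      then show ?thesis
        using sym_p_alpha \<beta>_V p_alpha_subset_vanishing_root_sum p_alpha_uminus by fastforce
    qed
  qed
qed

lemma centralizer_ppart_eq_vanishing_root_sum:
  assumes g: "self_adjoint_lie_algebra g" and a: "maximal_abelian g a" and "V \<subseteq> a"
    and H0: "regular_element g a H0"
  shows "centralizer (ppart g) V = vanishing_root_sum g a H0 V"
proof
  have "subspace g" and a_ppart: "a \<subseteq> ppart g"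
    and a_comm: "\<And>H H'. H \<in> a \<Longrightarrow> H' \<in> a \<Longrightarrow> lie_bracket H H' = 0"
    using g a by (auto simp: self_adjoint_lie_algebra_def maximal_abelian_def abelian_subspace_def)
  have "a \<subseteq> centralizer (ppart g) V"
    using a_ppart \<open>V \<subseteq> a\<close> a_comm by (auto simp: centralizer_def)
  moreover have "p_alpha g a \<alpha> \<subseteq> centralizer (ppart g) V" if "\<forall>v\<in>V. \<alpha> v = 0" for \<alpha>
  proof
    fix X assume "X \<in> p_alpha g a \<alpha>"
    then show "X \<in> centralizer (ppart g) V"
      using that \<open>V \<subseteq> a\<close> lie_bracket_p_alpha_eq_0[of X g a \<alpha>]
      by (auto simp: centralizer_def p_alpha_def[of g a \<alpha>])
  qed
  ultimately show "vanishing_root_sum g a H0 V \<subseteq> centralizer (ppart g) V"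
    unfolding vanishing_root_sum_def
    by (intro span_minimal subspace_centralizer subspace_ppart \<open>subspace g\<close>) blast
  let ?Z = "centralizer g V"
  let ?J = "{x \<in> ?Z. \<exists>c. \<forall>H\<in>a. lie_bracket H x = c H *\<^sub>R x}"
  have "?Z \<subseteq> span ?J"
  proof (rule commuting_selfadjoint_simultaneous_eigenvectors)
    show "linear (lie_bracket H)" for H
      by (rule linear_lie_bracket)
    show "inner (lie_bracket H x) y = inner x (lie_bracket H y)" if "H \<in> a" for H x y
      using that a_ppart by (auto simp: ppart_def intro: inner_lie_bracket_symmetric)
    show "lie_bracket H (lie_bracket H' x) = lie_bracket H' (lie_bracket H x)"
      if "H \<in> a" "H' \<in> a" for H H' x
      using a_comm[OF that] by (simp add: lie_bracket_jacobi[of H H' x])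
    show "subspace ?Z"
      by (rule subspace_centralizer[OF \<open>subspace g\<close>])
    show "lie_bracket H ` ?Z \<subseteq> ?Z" if "H \<in> a" for H
    proof
      fix Y assume "Y \<in> lie_bracket H ` ?Z"
      then obtain X where X: "X \<in> g" "\<forall>v\<in>V. lie_bracket v X = 0" and Y: "Y = lie_bracket H X"
        by (auto simp: centralizer_def)
      have "H \<in> g"
        using that a_ppart by (auto simp: ppart_def)
      then have "Y \<in> g"
        using g X(1) Y by (simp add: self_adjoint_lie_algebra_def)
      moreover have "lie_bracket v Y = 0" if "v \<in> V" for v
        using X(2) that a_comm[of v H] \<open>V \<subseteq> a\<close> \<open>H \<in> a\<close>
        by (auto simp: Y lie_bracket_jacobi[of v H X])
      ultimately show "Y \<in> ?Z"
        by (simp add: centralizer_def)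
    qed
  qed
  also have "span ?J \<subseteq> symmetric_part -` vanishing_root_sum g a H0 V"
    using symmetric_part_joint_eigenvector_in_vanishing_root_sum[OF g a \<open>V \<subseteq> a\<close> H0]
    by (intro span_minimal linear_subspace_vimage linear_symmetric_part)
      (auto simp: vanishing_root_sum_def)
  finally show "centralizer (ppart g) V \<subseteq> vanishing_root_sum g a H0 V"
    by (auto simp: centralizer_def ppart_def symmetric_part_eq)
qed

theorem proposition2p13:
  fixes g P V a :: "(real^'n^'n) set" and k :: nat and H0 :: "real^'n^'n"
  assumes "noncompact_type g"
    and "1 \<le> k" and "k \<le> real_rank g"
    and "lie_triple_system g P"
    and "flat_factor P k V"
    and "dim P = srk g k"
    and "maximal_abelian g a" and "V \<subseteq> a"
    and "regular_element g a H0"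
  shows "P = span (a \<union> \<Union> {p_alpha g a \<alpha> | \<alpha>. \<alpha> \<in> positive_roots g a H0 \<and> (\<forall>v\<in>V. \<alpha> v = 0)})"
proof -
  have g: "self_adjoint_lie_algebra g"
    using assms(1) by (simp add: noncompact_type_def)
  have "P = centralizer (ppart g) V"
    by (rule maximal_split_lie_triple_system_eq_centralizer[OF g assms(4-6)])
  also have "\<dots> = vanishing_root_sum g a H0 V"
    by (rule centralizer_ppart_eq_vanishing_root_sum[OF g assms(7-9)])
  finally show ?thesis
    by (simp add: vanishing_root_sum_def)
qed

end
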